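(* Let $u\in A^{\mathbb{N}}$ and $x\in\mathbb{P}\mathbb{R}_+^d$. If the worm $W(u)$ has non-empty interior for the topology $\mathcal{T}_x$, then $\pi_x(W(u))$ is bounded.
   Context: $A=\{0,\dots,d\}$, $h(y)=\sum_iy_i$, $P=\{h=0\}\subseteq\mathbb{R}^{d+1}$. $\mathbb{P}\mathbb{R}_+^d$ is the set of positive directions, $v(x)$ the $\ell^1$-normalized representative, $\pi_x(z)=z-h(z)v(x)$. $\mathbb{H}=\{z\in\mathbb{Z}^{d+1}:h(z)\ge0\}$; $\mathcal{T}_x$ is the topology on $\mathbb{H}$ whose open sets are $\pi_x^{-1}(U)\cap\mathbb{H}$ with $U\subseteq P$ open. $W(u)=\{\mathrm{ab}(p):p\text{ finite prefix of }u\}$, $\mathrm{ab}(p)$ counting letters. *)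

theory Defs
  imports "HOL-Analysis.Analysis"
begin

text \<open>The alphabet A = {0,...,d} is modelled by a finite type 'a (so d+1 = CARD('a)).
  Vectors of R^{d+1} are real^'a, those of Z^{d+1} are int^'a.\<close>

definition hsum :: "real^'a::finite \<Rightarrow> real" where
  "hsum y = (\<Sum>i\<in>UNIV. y $ i)"

definition hsum_int :: "int^'a::finite \<Rightarrow> int" where
  "hsum_int z = (\<Sum>i\<in>UNIV. z $ i)"

definition Pplane :: "(real^'a::finite) set" where
  "Pplane = {y. hsum y = 0}"

text \<open>Points of the projective set of positive directions are represented by
  nonzero vectors with nonnegative coordinates.\<close>
definition pos_dir :: "real^'a::finite \<Rightarrow> bool" where
  "pos_dir x \<longleftrightarrow> (\<forall>i. 0 \<le> x $ i) \<and> x \<noteq> 0"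

definition vrep :: "real^'a::finite \<Rightarrow> real^'a" where
  "vrep x = (1 / (\<Sum>i\<in>UNIV. \<bar>x $ i\<bar>)) *\<^sub>R x"

definition proj :: "real^'a::finite \<Rightarrow> real^'a \<Rightarrow> real^'a" where
  "proj x z = z - hsum z *\<^sub>R vrep x"

definition rvec :: "int^'a::finite \<Rightarrow> real^'a" where
  "rvec z = (\<chi> i. of_int (z $ i))"

definition Hset :: "(int^'a::finite) set" where
  "Hset = {z. hsum_int z \<ge> 0}"

definition Tx :: "real^'a::finite \<Rightarrow> (int^'a) topology" where
  "Tx x = pullback_topology Hset (\<lambda>z. proj x (rvec z)) (top_of_set Pplane)"

definition ab :: "'a::finite list \<Rightarrow> int^'a" where
  "ab p = (\<chi> i. int (count_list p i))"

definition worm :: "(nat \<Rightarrow> 'a::finite) \<Rightarrow> (int^'a) set" where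
  "worm u = {ab (map u [0..<n]) | n. True}"

end

theory Submission
  imports Defs
begin

text \<open>Let \<open>w\<^sub>n\<close> be the abelianization of the prefix of length \<open>n\<close>. Then \<open>W(u)\<close> meets each
  level \<open>h = n\<close> only in \<open>w\<^sub>n\<close>, and \<open>\<pi>\<^sub>x(w\<^sub>n)\<close> moves by at most 2 when \<open>n\<close> grows by one. An
  open set of \<open>\<T>\<^sub>x\<close> inside \<open>W(u)\<close> contains, for some \<open>n\<^sub>0\<close>, every point \<open>w\<^bsub>n\<^sub>0\<^esub> + t\<close> of \<open>H\<close>
  with \<open>\<pi>\<^sub>x(t)\<close> small, and such a point must be \<open>w\<^bsub>n\<^sub>0 + h(t)\<^esub>\<close>. Since the rotation
  \<open>m \<mapsto> m v(x)\<close> of the torus \<open>\<real>\<^sup>d\<^sup>+\<^sup>1 / \<int>\<^sup>d\<^sup>+\<^sup>1\<close> is uniformly recurrent, integer vectors \<open>t\<close>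
  with \<open>\<pi>\<^sub>x(t)\<close> small exist at every level up to a bounded shift. So \<open>\<pi>\<^sub>x(w\<^sub>n)\<close> is bounded
  along a syndetic set of \<open>n\<close>, hence, by the bounded steps, everywhere.\<close>

lemma hsum_diff: "hsum (a - b) = hsum a - hsum b"
  by (simp add: hsum_def sum_subtractf)

lemma hsum_scaleR: "hsum (c *\<^sub>R a) = c * hsum a"
  by (simp add: hsum_def sum_distrib_left)

lemma hsum_int_add: "hsum_int (a + b) = hsum_int a + hsum_int b"
  by (simp add: hsum_int_def sum.distrib)

lemma hsum_rvec: "hsum (rvec z) = of_int (hsum_int z)"
  by (simp add: hsum_def hsum_int_def rvec_def)

lemma rvec_add: "rvec (a + b) = rvec a + rvec b"
  by (simp add: rvec_def vec_eq_iff)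

lemma proj_add: "proj x (a + b) = proj x a + proj x b"
  by (simp add: proj_def hsum_def sum.distrib algebra_simps)

lemma hsum_vrep:
  assumes "pos_dir x"
  shows "hsum (vrep x) = 1"
proof -
  have nonneg: "\<And>i. 0 \<le> x $ i" using assms by (simp add: pos_dir_def)
  have "(\<Sum>i\<in>UNIV. x $ i) \<noteq> 0"
  proof
    assume "(\<Sum>i\<in>UNIV. x $ i) = 0"
    then have "x = 0" using nonneg by (simp add: sum_nonneg_eq_0_iff vec_eq_iff)
    then show False using assms by (simp add: pos_dir_def)
  qed
  then show ?thesis
    using nonneg by (simp add: vrep_def hsum_scaleR hsum_def flip: sum_divide_distrib)
qed

lemma norm_vrep_le_1:
  assumes "pos_dir x"
  shows "norm (vrep x) \<le> 1"
proof -
  have "0 \<le> vrep x $ i" for i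
    using assms by (simp add: vrep_def pos_dir_def sum_nonneg)
  then have "(\<Sum>i\<in>UNIV. \<bar>vrep x $ i\<bar>) = 1"
    using hsum_vrep[OF assms] by (simp add: hsum_def)
  then show ?thesis using norm_le_l1_cart[of "vrep x"] by simp
qed

lemma proj_in_Pplane: "pos_dir x \<Longrightarrow> proj x z \<in> Pplane"
  by (simp add: Pplane_def proj_def hsum_diff hsum_scaleR hsum_vrep)

lemma proj_rvec: "proj x (rvec t) = rvec t - of_int (hsum_int t) *\<^sub>R vrep x"
  by (simp add: proj_def hsum_rvec)

lemma sum_abs_components_less:
  fixes y :: "real^'n" and e :: real
  assumes "\<And>i. \<bar>y $ i\<bar> < e"
  shows "(\<Sum>i\<in>UNIV. \<bar>y $ i\<bar>) < CARD('n) * e"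
  using sum_strict_mono[of UNIV "\<lambda>i. \<bar>y $ i\<bar>" "\<lambda>_. e"] assms by simp

lemma norm_less_if_components_less:
  fixes y :: "real^'n" and e :: real
  assumes "\<And>i. \<bar>y $ i\<bar> < e"
  shows "norm y < CARD('n) * e"
  using sum_abs_components_less[OF assms] norm_le_l1_cart[of y] by linarith

lemma abs_hsum_less_if_components_less:
  fixes y :: "real^'n" and e :: real
  assumes "\<And>i. \<bar>y $ i\<bar> < e"
  shows "\<bar>hsum y\<bar> < CARD('n) * e"
  using sum_abs_components_less[OF assms] sum_abs[of "\<lambda>i. y $ i" UNIV] unfolding hsum_def
  by linarith

lemma openin_Tx_contains_ball:
  assumes "pos_dir x" and "openin (Tx x) T" and "z0 \<in> T"
  obtains r where "r > 0"
    and "\<And>z. z \<in> Hset \<Longrightarrow> dist (proj x (rvec z)) (proj x (rvec z0)) < r \<Longrightarrow> z \<in> T"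
proof -
  let ?p = "\<lambda>z. proj x (rvec z)"
  obtain U where "open U" and T: "T = ?p -` (U \<inter> Pplane) \<inter> Hset"
    using assms(2) by (auto simp: Tx_def openin_pullback_topology openin_open)
  then obtain r where "r > 0" and "ball (?p z0) r \<subseteq> U"
    using assms(3) open_contains_ball by blast
  show ?thesis
  proof (rule that[OF \<open>r > 0\<close>])
    fix z assume "z \<in> Hset" and "dist (?p z) (?p z0) < r"
    then show "z \<in> T"
      using \<open>ball (?p z0) r \<subseteq> U\<close> proj_in_Pplane[OF assms(1)] by (auto simp: T dist_commute)
  qed
qed

definition prefix_ab :: "(nat \<Rightarrow> 'a::finite) \<Rightarrow> nat \<Rightarrow> int^'a" where
  "prefix_ab u n = ab (map u [0..<n])"

lemma worm_eq_range_prefix_ab: "worm u = range (prefix_ab u)"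
  by (auto simp: worm_def prefix_ab_def)

lemma prefix_ab_Suc: "prefix_ab u (Suc n) = prefix_ab u n + axis (u n) 1"
  by (simp add: prefix_ab_def ab_def axis_def vec_eq_iff)

lemma hsum_int_prefix_ab: "hsum_int (prefix_ab u n) = int n"
proof (induction n)
  case 0
  then show ?case by (simp add: prefix_ab_def ab_def hsum_int_def)
next
  case (Suc n)
  have "hsum_int (axis (u n) (1::int)) = 1"
    by (simp add: hsum_int_def axis_def)
  then show ?case by (simp add: prefix_ab_Suc hsum_int_add Suc)
qed

lemma worm_elem_eq_prefix_ab: "z \<in> worm u \<Longrightarrow> z = prefix_ab u (nat (hsum_int z))"
  by (auto simp: worm_eq_range_prefix_ab hsum_int_prefix_ab)

lemma norm_proj_prefix_ab_step:
  assumes "pos_dir x"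
  shows "norm (proj x (rvec (prefix_ab u (Suc n))) - proj x (rvec (prefix_ab u n))) \<le> 2"
proof -
  have "rvec (axis (u n) 1) = axis (u n) 1"
    by (simp add: rvec_def axis_def vec_eq_iff)
  moreover have "proj x (axis (u n) 1) = axis (u n) 1 - vrep x"
    by (simp add: proj_def hsum_def axis_def)
  ultimately have "proj x (rvec (prefix_ab u (Suc n))) - proj x (rvec (prefix_ab u n))
      = axis (u n) 1 - vrep x"
    by (simp add: prefix_ab_Suc rvec_add proj_add)
  then show ?thesis
    using norm_triangle_ineq4[of "axis (u n) (1::real)" "vrep x"] norm_vrep_le_1[OF assms] by simp
qed

lemma norm_diff_le_if_steps_le:
  fixes g :: "nat \<Rightarrow> 'a::real_normed_vector"
  assumes "\<And>n. norm (g (Suc n) - g n) \<le> L"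
  shows "norm (g (n + k) - g n) \<le> L * real k"
proof (induction k)
  case 0
  then show ?case by simp
next
  case (Suc k)
  have "norm (g (n + Suc k) - g n) \<le> norm (g (Suc (n + k)) - g (n + k)) + norm (g (n + k) - g n)"
    using norm_triangle_ineq[of "g (Suc (n + k)) - g (n + k)" "g (n + k) - g n"] by simp
  then show ?case using assms[of "n + k"] Suc by (simp add: algebra_simps)
qed

lemma Bseq_if_syndetically_bounded:
  fixes g :: "nat \<Rightarrow> 'a::real_normed_vector"
  assumes step: "\<And>n. norm (g (Suc n) - g n) \<le> L"
    and syndetic: "\<And>m. \<exists>k\<le>min m K. norm (g (m - k)) \<le> C"
  shows "Bseq g"
proof (rule BseqI')
  fix m
  obtain k where "k \<le> min m K" and "norm (g (m - k)) \<le> C"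
    using syndetic by blast
  moreover have "norm (g m - g (m - k)) \<le> L * real k"
    using norm_diff_le_if_steps_le[where g = g, OF step, of "m - k" k] \<open>k \<le> min m K\<close> by simp
  moreover have "L * real k \<le> L * real K"
    using \<open>k \<le> min m K\<close> order_trans[OF norm_ge_zero step] by (simp add: mult_left_mono)
  ultimately show "norm (g m) \<le> C + L * real K"
    using norm_triangle_ineq2[of "g m" "g (m - k)"] by linarith
qed

text \<open>Uniform recurrence of the rotation \<open>m \<mapsto> m v\<close> of the torus \<open>\<real>\<^sup>n / \<int>\<^sup>n\<close>,
  stated with integer lifts \<open>t\<close>.\<close>

lemma uniformly_recurrent_integer_approximation:
  fixes v :: "real^'n" assumes "e > 0"
  obtains K :: nat
  where "\<And>m. \<exists>k\<le>min m K. \<exists>t. \<forall>i. \<bar>rvec t $ i - real (m - k) * v $ i\<bar> < e"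
proof -
  define f where "f m = (\<chi> i. frac (real m * v $ i))" for m :: nat
  have "range f \<subseteq> cbox 0 1"
    by (auto simp: f_def mem_box_cart frac_lt_1 less_imp_le)
  then have "compact (closure (range f))"
    using bounded_cbox bounded_subset compact_closure by blast
  moreover have "closure (range f) \<subseteq> (\<Union>k. ball (f k) e)"
  proof
    fix y assume "y \<in> closure (range f)"
    then obtain k where "dist (f k) y < e"
      using closure_approachable \<open>e > 0\<close> by blast
    then show "y \<in> (\<Union>k. ball (f k) e)" by auto
  qed
  ultimately obtain F where "finite F" and F: "closure (range f) \<subseteq> (\<Union>k\<in>F. ball (f k) e)"
    by (meson compactE_image open_ball)
  show ?thesis
  proof
    fix m
    show "\<exists>k\<le>min m (Max (insert 0 F)). \<exists>t. \<forall>i. \<bar>rvec t $ i - real (m - k) * v $ i\<bar> < e"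
    proof (cases "m \<le> Max (insert 0 F)")
      case True
      have "\<forall>i. \<bar>rvec 0 $ i - real (m - m) * v $ i\<bar> < e"
        using \<open>e > 0\<close> by (simp add: rvec_def)
      moreover have "m \<le> min m (Max (insert 0 F))"
        using True by simp
      ultimately show ?thesis by blast
    next
      case False
      have "f m \<in> (\<Union>k\<in>F. ball (f k) e)"
        using subsetD[OF F subsetD[OF closure_subset rangeI]] .
      then obtain k where "k \<in> F" and "f m \<in> ball (f k) e"
        by (rule UN_E)
      then have "dist (f k) (f m) < e" and "k \<le> Max (insert 0 F)"
        using \<open>finite F\<close> by simp_all
      then have "k < m"
        using False by linarith
      define t :: "int^'n" where "t = (\<chi> i. \<lfloor>real m * v $ i\<rfloor> - \<lfloor>real k * v $ i\<rfloor>)"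
      have "\<bar>rvec t $ i - real (m - k) * v $ i\<bar> < e" for i
      proof -
        have "rvec t $ i - real (m - k) * v $ i = (f k - f m) $ i"
          using \<open>k < m\<close> by (simp add: t_def rvec_def f_def frac_def of_nat_diff algebra_simps)
        then show ?thesis
          using component_le_norm_cart[of "f k - f m" i] \<open>dist (f k) (f m) < e\<close>
          by (simp add: dist_norm)
      qed
      moreover have "k \<le> min m (Max (insert 0 F))"
        using \<open>k \<le> Max (insert 0 F)\<close> \<open>k < m\<close> by simp
      ultimately show ?thesis by blast
    qed
  qed
qed

lemma small_projection_recurrence:
  fixes x :: "real^'a::finite"
  assumes "pos_dir x" and "r > 0"
  obtains K :: nat
  where "\<And>m. \<exists>k\<le>min m K. \<exists>t. hsum_int t = int (m - k) \<and> norm (proj x (rvec t)) < r"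
proof -
  define e where "e = min r 1 / CARD('a)"
  have "e > 0" using \<open>r > 0\<close> by (simp add: e_def)
  then obtain K
    where K: "\<And>m. \<exists>k\<le>min m K. \<exists>t. \<forall>i. \<bar>rvec t $ i - real (m - k) * vrep x $ i\<bar> < e"
    using uniformly_recurrent_integer_approximation by blast
  have small: "hsum_int t = int j \<and> norm (proj x (rvec t)) < r"
    if "\<forall>i. \<bar>rvec t $ i - real j * vrep x $ i\<bar> < e" for t :: "int^'a" and j
  proof -
    have close: "\<And>i. \<bar>(rvec t - real j *\<^sub>R vrep x) $ i\<bar> < e"
      using that by simp
    have card_e: "CARD('a) * e = min r 1" by (simp add: e_def)
    have "\<bar>of_int (hsum_int t) - real j\<bar> < 1"
      using abs_hsum_less_if_components_less[OF close] card_e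
      by (simp add: hsum_diff hsum_scaleR hsum_rvec hsum_vrep[OF assms(1)])
    then have "hsum_int t = int j" by linarith
    moreover have "norm (rvec t - real j *\<^sub>R vrep x) < r"
      using norm_less_if_components_less[OF close] card_e by simp
    ultimately show ?thesis by (simp add: proj_rvec)
  qed
  show ?thesis
  proof (rule that)
    fix m
    obtain k t where "k \<le> min m K" and "\<forall>i. \<bar>rvec t $ i - real (m - k) * vrep x $ i\<bar> < e"
      using K by blast
    then show "\<exists>k\<le>min m K. \<exists>t. hsum_int t = int (m - k) \<and> norm (proj x (rvec t)) < r"
      using small by blast
  qed
qed

lemma interior_worm_contains_translates:
  assumes "pos_dir x" and "(Tx x) interior_of (worm u) \<noteq> {}"
  obtains r n0 where "r > 0"
    and "\<And>t j. hsum_int t = int j \<Longrightarrow> norm (proj x (rvec t)) < r \<Longrightarrow>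
      prefix_ab u (j + n0) = prefix_ab u n0 + t"
proof -
  let ?p = "\<lambda>z. proj x (rvec z)"
  obtain T z0 where T: "openin (Tx x) T" "T \<subseteq> worm u" and "z0 \<in> T"
    using assms(2) by (auto simp: interior_of_def)
  then obtain n0 where z0: "z0 = prefix_ab u n0"
    by (auto simp: worm_eq_range_prefix_ab)
  obtain r where "r > 0" and near_z0: "\<And>z. z \<in> Hset \<Longrightarrow> dist (?p z) (?p z0) < r \<Longrightarrow> z \<in> T"
    using openin_Tx_contains_ball[OF assms(1) T(1) \<open>z0 \<in> T\<close>] by blast
  show ?thesis
  proof (rule that[OF \<open>r > 0\<close>])
    fix t j assume "hsum_int t = int j" and "norm (?p t) < r"
    then have level: "hsum_int (z0 + t) = int (j + n0)"
      by (simp add: hsum_int_add z0 hsum_int_prefix_ab)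
    have "z0 + t \<in> T"
      using level \<open>norm (?p t) < r\<close>
      by (intro near_z0) (auto simp: Hset_def dist_norm rvec_add proj_add)
    then have "z0 + t = prefix_ab u (nat (hsum_int (z0 + t)))"
      using T(2) worm_elem_eq_prefix_ab by blast
    then show "prefix_ab u (j + n0) = prefix_ab u n0 + t"
      unfolding level nat_int by (simp add: z0)
  qed
qed

theorem lemma3p15:
  fixes u :: "nat \<Rightarrow> 'a::finite" and x :: "real^'a"
  assumes "pos_dir x"
    and "(Tx x) interior_of (worm u) \<noteq> {}"
  shows "bounded (proj x ` rvec ` worm u)"
proof -
  let ?p = "\<lambda>z. proj x (rvec z)"
  obtain r n0 where "r > 0" and translates:
    "\<And>t j. hsum_int t = int j \<Longrightarrow> norm (proj x (rvec t)) < r \<Longrightarrow>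
      prefix_ab u (j + n0) = prefix_ab u n0 + t"
    using interior_worm_contains_translates[OF assms] by metis
  obtain K where K: "\<And>m. \<exists>k\<le>min m K. \<exists>t. hsum_int t = int (m - k) \<and> norm (proj x (rvec t)) < r"
    using small_projection_recurrence[OF assms(1) \<open>r > 0\<close>] by metis
  have "Bseq (\<lambda>m. ?p (prefix_ab u (m + n0)))"
  proof (rule Bseq_if_syndetically_bounded)
    show "norm (?p (prefix_ab u (Suc m + n0)) - ?p (prefix_ab u (m + n0))) \<le> 2" for m
      using norm_proj_prefix_ab_step[OF assms(1)] by simp
    show "\<exists>k\<le>min m K. norm (?p (prefix_ab u (m - k + n0))) \<le> norm (?p (prefix_ab u n0)) + r" for m
    proof -
      obtain k t where k: "k \<le> min m K" and t: "hsum_int t = int (m - k)" "norm (?p t) < r"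
        using K by blast
      have "?p (prefix_ab u (m - k + n0)) = ?p (prefix_ab u n0) + ?p t"
        using translates[OF t] by (simp add: rvec_add proj_add)
      then have "norm (?p (prefix_ab u (m - k + n0))) \<le> norm (?p (prefix_ab u n0)) + r"
        using t(2) norm_triangle_ineq[of "?p (prefix_ab u n0)" "?p t"] by simp
      then show ?thesis
        using k by blast
    qed
  qed
  then have "Bseq (\<lambda>n. ?p (prefix_ab u n))"
    by (rule Bseq_offset)
  then show ?thesis
    by (simp add: Bseq_eq_bounded worm_eq_range_prefix_ab image_image)
qed

end
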